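(* Fix $k\ge0$. For each $N\ge k$, let $\varphi_N\subseteq\{1,\dots,N\}^2$ be a deterministic scattered set of cardinality $k$, i.e. its $k$ elements lie in pairwise distinct rows and pairwise distinct columns. Let $X^{N\times N}$ have i.i.d. Bernoulli$(q)$ entries, $0<q<1$. Define the SP rate $$\alpha_{sp}^N(\varphi_N)=\frac1{N^2}\sum_{m=1}^N\sum_{n=1}^N\bigvee_{(i,j)\in\varphi_N}X_{m,j}X_{i,j}X_{i,n},$$ where $\bigvee$ is the logical OR. Let $K'_N=|\{(i,j)\in\varphi_N: X_{i,j}=1\}|$; thus $K'_N\sim\mathrm{Binomial}(k,q)$. Then $$\alpha_{sp}^N(\varphi_N)-\bigl(1-(1-q^2)^{K'_N}\bigr)\to0$$ in probability as $N\to\infty$. Equivalently, $\alpha_{sp}^N(\varphi_N)$ converges to a random variable $\alpha_k$ whose law is $$P_{\alpha_k}(x)=\sum_{k'=0}^k\binom{k}{k'}q^{k'}(1-q)^{k-k'}\,\delta\bigl[x-1+(1-q^2)^{k'}\bigr].$$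
   Context: $\delta$ denotes the Dirac delta. $\bigvee$ over an empty index set is $0$. *)

theory Defs
  imports "HOL-Probability.Probability"
begin

text \<open>Law of an N x N matrix with i.i.d. Bernoulli(q) entries, indexed by {1..N} x {1..N};
  entry X (i,j) = True means X_{i,j} = 1. Outside the index range the value is False.\<close>
definition bern_matrix :: "real \<Rightarrow> nat \<Rightarrow> (nat \<times> nat \<Rightarrow> bool) pmf" where
  "bern_matrix q N = Pi_pmf ({1..N} \<times> {1..N}) False (\<lambda>_. bernoulli_pmf q)"

definition scattered :: "(nat \<times> nat) set \<Rightarrow> bool" where
  "scattered S \<longleftrightarrow> (\<forall>i j i' j'. (i,j) \<in> S \<longrightarrow> (i',j') \<in> S \<longrightarrow> (i,j) \<noteq> (i',j') \<longrightarrow> i \<noteq> i' \<and> j \<noteq> j')"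

text \<open>SP rate; the OR over an empty index set is 0 (empty existential is False).\<close>
definition sp_rate :: "nat \<Rightarrow> (nat \<times> nat) set \<Rightarrow> (nat \<times> nat \<Rightarrow> bool) \<Rightarrow> real" where
  "sp_rate N phi X = (1 / (real N)^2) *
     (\<Sum>m=1..N. \<Sum>n=1..N. (if (\<exists>(i,j)\<in>phi. X (m,j) \<and> X (i,j) \<and> X (i,n)) then 1 else 0))"

definition K' :: "(nat \<times> nat) set \<Rightarrow> (nat \<times> nat \<Rightarrow> bool) \<Rightarrow> nat" where
  "K' phi X = card {(i,j) \<in> phi. X (i,j)}"

end

theory Submission
  imports Defs
begin

text \<open>Write \<open>Z = 1 - (1 - q\<^sup>2)\<^bsup>K'\<^esup>\<close> and let \<open>I\<^sub>m\<^sub>n\<close> be the indicator of the OR in the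
  SP rate, so that the rate minus \<open>Z\<close> is the average of the \<open>N\<^sup>2\<close> deviations \<open>I\<^sub>m\<^sub>n - Z\<close>.
  Both \<open>1 - I\<^sub>m\<^sub>n\<close> and \<open>1 - Z\<close> are products over the points \<open>(i,j)\<close> of \<open>\<phi>\<close> of factors
  \<open>1 - X\<^sub>m\<^sub>j X\<^sub>i\<^sub>j X\<^sub>i\<^sub>n\<close> and \<open>1 - q\<^sup>2 X\<^sub>i\<^sub>j\<close>. If the rows \<open>m \<noteq> m'\<close> and columns \<open>n \<noteq> n'\<close> avoid
  the rows and columns of \<open>\<phi>\<close>, then, as \<open>\<phi>\<close> is scattered, the factors belonging to different
  points of \<open>\<phi>\<close> involve disjoint sets of entries, and for each point every product of two
  factors has the same mean \<open>1 - 2q\<^sup>3 + q\<^sup>5\<close>; hence the deviations at \<open>(m,n)\<close> and \<open>(m',n')\<close>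
  are uncorrelated. All other pairs, at most \<open>(4k+2)N\<^sup>3\<close> of them, contribute at most 1
  each, so the second moment of the difference is \<open>O(1/N)\<close> and Chebyshev's inequality
  concludes.\<close>

definition depends_only_on :: "(('a \<Rightarrow> 'b) \<Rightarrow> real) \<Rightarrow> 'a set \<Rightarrow> bool" where
  "depends_only_on g T \<longleftrightarrow> (\<forall>X Y. (\<forall>x\<in>T. X x = Y x) \<longrightarrow> g X = g Y)"

lemma depends_only_onD: "depends_only_on g T \<Longrightarrow> (\<And>x. x \<in> T \<Longrightarrow> X x = Y x) \<Longrightarrow> g X = g Y"
  by (simp add: depends_only_on_def)

lemma depends_only_on_mono: "depends_only_on g T \<Longrightarrow> T \<subseteq> T' \<Longrightarrow> depends_only_on g T'"
  unfolding depends_only_on_def by blast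

lemma finite_set_pmf_Pi_pmf:
  fixes p :: "'a \<Rightarrow> 'b :: finite pmf"
  assumes "finite S"
  shows "finite (set_pmf (Pi_pmf S d p))"
  by (rule finite_subset[OF set_Pi_pmf_subset'[OF assms]]) (intro finite_PiE_dflt assms, simp)

lemma integrable_Pi_pmf:
  fixes p :: "'a \<Rightarrow> 'b :: finite pmf" and f :: "('a \<Rightarrow> 'b) \<Rightarrow> real"
  assumes "finite S"
  shows "integrable (measure_pmf (Pi_pmf S d p)) f"
  by (intro integrable_measure_pmf_finite finite_set_pmf_Pi_pmf assms)

lemma expectation_Pi_pmf_subset:
  assumes "finite S" "T \<subseteq> S" "depends_only_on g T"
  shows "measure_pmf.expectation (Pi_pmf S d p) g = measure_pmf.expectation (Pi_pmf T d p) g"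
proof -
  have "Pi_pmf T d p = map_pmf (\<lambda>f x. if x \<in> T then f x else d) (Pi_pmf S d p)"
    by (rule Pi_pmf_subset) (use assms in auto)
  moreover have "(\<lambda>f. g (\<lambda>x. if x \<in> T then f x else d)) = g"
    by (intro ext depends_only_onD[OF assms(3)]) simp
  ultimately show ?thesis by simp
qed

lemma expectation_pair_pmf_mult:
  fixes f :: "'a \<Rightarrow> real" and g :: "'b \<Rightarrow> real"
  assumes "finite (set_pmf P)" "finite (set_pmf Q)"
  shows "measure_pmf.expectation (pair_pmf P Q) (\<lambda>z. f (fst z) * g (snd z))
       = measure_pmf.expectation P f * measure_pmf.expectation Q g"
proof -
  have "measure_pmf.expectation (pair_pmf P Q) (\<lambda>z. f (fst z) * g (snd z))
     = (\<Sum>z\<in>set_pmf P \<times> set_pmf Q. f (fst z) * g (snd z) * pmf (pair_pmf P Q) z)"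
    by (rule integral_measure_pmf_real) (use assms in auto)
  also have "\<dots> = (\<Sum>x\<in>set_pmf P. \<Sum>y\<in>set_pmf Q. (f x * pmf P x) * (g y * pmf Q y))"
    unfolding sum.cartesian_product by (intro sum.cong refl) (auto simp: pmf_pair algebra_simps)
  also have "\<dots> = (\<Sum>x\<in>set_pmf P. f x * pmf P x) * (\<Sum>y\<in>set_pmf Q. g y * pmf Q y)"
    by (simp add: sum_product)
  also have "\<dots> = measure_pmf.expectation P f * measure_pmf.expectation Q g"
    using assms by (simp add: integral_measure_pmf_real)
  finally show ?thesis .
qed

lemma expectation_Pi_pmf_prod_disjoint:
  fixes g :: "'i \<Rightarrow> ('a \<Rightarrow> 'b :: finite) \<Rightarrow> real"
  assumes "finite A" "finite S" "\<forall>a\<in>A. T a \<subseteq> S" "disjoint_family_on T A"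
    "\<forall>a\<in>A. depends_only_on (g a) (T a)"
  shows "measure_pmf.expectation (Pi_pmf S d p) (\<lambda>X. \<Prod>a\<in>A. g a X)
    = (\<Prod>a\<in>A. measure_pmf.expectation (Pi_pmf S d p) (g a))"
  using assms
proof (induction A arbitrary: S rule: finite_induct)
  case empty
  then show ?case by simp
next
  case (insert a A)
  define U where "U = T a"
  define S' where "S' = S - U"
  have fin: "finite U" "finite S'"
    using insert.prems unfolding U_def S'_def by (auto intro: finite_subset)
  have S_split: "S = U \<union> S'" "U \<inter> S' = {}"
    using insert.prems unfolding U_def S'_def by auto
  have T_S': "\<forall>b\<in>A. T b \<subseteq> S'"
    using insert.prems insert.hyps unfolding S'_def U_def disjoint_family_on_def by fastforce
  have dep_a: "depends_only_on (g a) U" and dep_A: "\<forall>b\<in>A. depends_only_on (g b) (T b)"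
    using insert.prems unfolding U_def by auto
  have glue: "(\<Prod>b\<in>insert a A. g b (\<lambda>x. if x \<in> U then f x else h x))
      = g a f * (\<Prod>b\<in>A. g b h)" for f h
  proof -
    have "g b (\<lambda>x. if x \<in> U then f x else h x) = g b h" if "b \<in> A" for b
      by (rule depends_only_onD[of "g b" "T b"]) (use dep_A T_S' S_split that in auto)
    moreover have "g a (\<lambda>x. if x \<in> U then f x else h x) = g a f"
      by (rule depends_only_onD[OF dep_a]) simp
    ultimately show ?thesis using insert.hyps by simp
  qed
  have "measure_pmf.expectation (Pi_pmf S d p) (\<lambda>X. \<Prod>b\<in>insert a A. g b X)
     = measure_pmf.expectation (map_pmf (\<lambda>(f,h) x. if x \<in> U then f x else h x)
          (pair_pmf (Pi_pmf U d p) (Pi_pmf S' d p))) (\<lambda>X. \<Prod>b\<in>insert a A. g b X)"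
    using Pi_pmf_union[OF fin S_split(2), of d p] S_split(1) by simp
  also have "\<dots> = measure_pmf.expectation (pair_pmf (Pi_pmf U d p) (Pi_pmf S' d p))
       (\<lambda>z. g a (fst z) * (\<Prod>b\<in>A. g b (snd z)))"
    by (subst integral_map_pmf) (simp only: case_prod_beta glue)
  also have "\<dots> = measure_pmf.expectation (Pi_pmf U d p) (g a) *
       measure_pmf.expectation (Pi_pmf S' d p) (\<lambda>X. \<Prod>b\<in>A. g b X)"
    by (rule expectation_pair_pmf_mult) (intro finite_set_pmf_Pi_pmf fin)+
  also have "measure_pmf.expectation (Pi_pmf U d p) (g a)
      = measure_pmf.expectation (Pi_pmf S d p) (g a)"
    by (rule expectation_Pi_pmf_subset[symmetric]) (use insert.prems dep_a S_split in auto)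
  also have "measure_pmf.expectation (Pi_pmf S' d p) (\<lambda>X. \<Prod>b\<in>A. g b X)
      = (\<Prod>b\<in>A. measure_pmf.expectation (Pi_pmf S d p) (g b))"
    using insert.prems T_S' dep_A S_split fin
    by (subst insert.IH) (auto simp: disjoint_family_on_def
        intro!: prod.cong expectation_Pi_pmf_subset[symmetric] intro: depends_only_on_mono)
  finally show ?case using insert.hyps by simp
qed

lemma expectation_Pi_pmf_prod_disjoint_eq_power:
  fixes g :: "'i \<Rightarrow> ('a \<Rightarrow> 'b :: finite) \<Rightarrow> real"
  assumes "finite A" "finite S" "\<forall>a\<in>A. T a \<subseteq> S" "disjoint_family_on T A"
    "\<forall>a\<in>A. depends_only_on (g a) (T a)"
    "\<forall>a\<in>A. measure_pmf.expectation (Pi_pmf S d p) (g a) = c"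
  shows "measure_pmf.expectation (Pi_pmf S d p) (\<lambda>X. \<Prod>a\<in>A. g a X) = c ^ card A"
  using expectation_Pi_pmf_prod_disjoint[OF assms(1-5)] assms(6) by (simp cong: prod.cong)

lemma expectation_Pi_bernoulli_all:
  assumes "finite S" "T \<subseteq> S" "0 \<le> q" "q \<le> 1"
  shows "measure_pmf.expectation (Pi_pmf S False (\<lambda>_. bernoulli_pmf q))
           (\<lambda>X. of_bool (\<forall>x\<in>T. X x)) = q ^ card T"
proof -
  define f :: "_ \<Rightarrow> bool \<Rightarrow> real" where "f x b = (if x \<in> T then of_bool b else 1)" for x b
  have fin_T: "finite T" using assms(1,2) by (rule finite_subset[rotated])
  have "of_bool (\<forall>x\<in>T. X x) = (\<Prod>x\<in>S. f x (X x))" for X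
  proof -
    have "(\<Prod>x\<in>S. f x (X x)) = (\<Prod>x\<in>T. of_bool (X x))"
      using assms(1,2) by (simp add: f_def prod.If_cases Int_absorb1)
    also have "\<dots> = of_bool (\<forall>x\<in>T. X x)"
      using fin_T by (cases "\<forall>x\<in>T. X x") (auto simp: prod_zero_iff)
    finally show ?thesis ..
  qed
  then have "measure_pmf.expectation (Pi_pmf S False (\<lambda>_. bernoulli_pmf q)) (\<lambda>X. of_bool (\<forall>x\<in>T. X x))
      = (\<Prod>x\<in>S. measure_pmf.expectation (bernoulli_pmf q) (f x))"
    by (simp only:) (rule expectation_prod_Pi_pmf;
        use assms in \<open>auto simp: f_def intro: integrable_measure_pmf_finite\<close>)
  moreover have "measure_pmf.expectation (bernoulli_pmf q) (f x) = (if x \<in> T then q else 1)" for x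
    using assms by (subst integral_measure_pmf_real[where A=UNIV]) (auto simp: f_def UNIV_bool)
  ultimately show ?thesis
    using assms(1,2) by (simp add: prod.If_cases Int_absorb1)
qed

definition sp_indicator :: "(nat \<times> nat) set \<Rightarrow> nat \<times> nat \<Rightarrow> (nat \<times> nat \<Rightarrow> bool) \<Rightarrow> real" where
  "sp_indicator A p X = (if \<exists>(i,j)\<in>A. X (fst p, j) \<and> X (i,j) \<and> X (i, snd p) then 1 else 0)"

definition sp_limit :: "real \<Rightarrow> (nat \<times> nat) set \<Rightarrow> (nat \<times> nat \<Rightarrow> bool) \<Rightarrow> real" where
  "sp_limit q A X = 1 - (1 - q^2) ^ K' A X"

definition sp_indicator_factor :: "nat \<times> nat \<Rightarrow> (nat \<times> nat \<Rightarrow> bool) \<Rightarrow> nat \<times> nat \<Rightarrow> real" where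
  "sp_indicator_factor p X a = 1 - of_bool (X (fst p, snd a) \<and> X a \<and> X (fst a, snd p))"

definition sp_limit_factor :: "real \<Rightarrow> (nat \<times> nat \<Rightarrow> bool) \<Rightarrow> nat \<times> nat \<Rightarrow> real" where
  "sp_limit_factor q X a = (if X a then 1 - q^2 else 1)"

lemma sp_indicator_eq_prod:
  assumes "finite A"
  shows "sp_indicator A p X = 1 - (\<Prod>a\<in>A. sp_indicator_factor p X a)"
proof (cases "\<exists>(i,j)\<in>A. X (fst p, j) \<and> X (i,j) \<and> X (i, snd p)")
  case True
  then obtain a where "a \<in> A" "sp_indicator_factor p X a = 0"
    by (auto simp: sp_indicator_factor_def)
  then have "(\<Prod>a\<in>A. sp_indicator_factor p X a) = 0"
    using assms by (metis prod_zero_iff)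
  then show ?thesis using True by (simp add: sp_indicator_def)
next
  case False
  then have "(\<Prod>a\<in>A. sp_indicator_factor p X a) = 1"
    by (intro prod.neutral) (auto simp: sp_indicator_factor_def)
  then show ?thesis using False by (simp add: sp_indicator_def)
qed

lemma sp_limit_eq_prod:
  assumes "finite A"
  shows "sp_limit q A X = 1 - (\<Prod>a\<in>A. sp_limit_factor q X a)"
proof -
  have "(\<Prod>a\<in>A. sp_limit_factor q X a)
      = (\<Prod>a\<in>A \<inter> {a. X a}. 1 - q^2) * (\<Prod>a\<in>A \<inter> - {a. X a}. 1)"
    unfolding sp_limit_factor_def using assms by (rule prod.If_cases)
  also have "\<dots> = (1 - q^2) ^ card (A \<inter> {a. X a})" by simp
  also have "A \<inter> {a. X a} = {(i,j)\<in>A. X (i,j)}" by auto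
  finally show ?thesis by (simp add: sp_limit_def K'_def)
qed

lemma sp_indicator_bounds: "0 \<le> sp_indicator A p X" "sp_indicator A p X \<le> 1"
  by (auto simp: sp_indicator_def)

lemma sp_limit_bounds:
  assumes "0 \<le> q" "q \<le> 1"
  shows "0 \<le> sp_limit q A X" "sp_limit q A X \<le> 1"
proof -
  have "0 \<le> 1 - q^2" "1 - q^2 \<le> 1" using assms by (auto simp: power_le_one)
  then show "0 \<le> sp_limit q A X" "sp_limit q A X \<le> 1"
    by (auto simp: sp_limit_def power_le_one)
qed

lemma expectation_sp_limit_factor_sq:
  assumes "finite S" "a \<in> S" "0 \<le> q" "q \<le> 1"
  shows "measure_pmf.expectation (Pi_pmf S False (\<lambda>_. bernoulli_pmf q))
           (\<lambda>X. sp_limit_factor q X a * sp_limit_factor q X a) = 1 - 2*q^3 + q^5"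
proof -
  have [simp]: "integrable (measure_pmf (Pi_pmf S False (\<lambda>_. bernoulli_pmf q))) (f :: _ \<Rightarrow> real)" for f
    by (rule integrable_Pi_pmf[OF assms(1)])
  have "(\<lambda>X. sp_limit_factor q X a * sp_limit_factor q X a)
      = (\<lambda>X. 1 + (q^4 - 2*q^2) * of_bool (\<forall>x\<in>{a}. X x))"
    by (auto simp: fun_eq_iff sp_limit_factor_def algebra_simps power2_eq_square power4_eq_xxxx)
  then show ?thesis
    using expectation_Pi_bernoulli_all[of S "{a}" q] assms
    by (simp add: algebra_simps power2_eq_square power3_eq_cube power4_eq_xxxx numeral_eq_Suc)
qed

lemma expectation_sp_limit_factor_indicator_factor:
  assumes "finite S" "{(i,j), (m,j), (i,n)} \<subseteq> S" "i \<noteq> m" "j \<noteq> n" "0 \<le> q" "q \<le> 1"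
  shows "measure_pmf.expectation (Pi_pmf S False (\<lambda>_. bernoulli_pmf q))
           (\<lambda>X. sp_limit_factor q X (i,j) * sp_indicator_factor (m,n) X (i,j)) = 1 - 2*q^3 + q^5"
proof -
  have [simp]: "integrable (measure_pmf (Pi_pmf S False (\<lambda>_. bernoulli_pmf q))) (f :: _ \<Rightarrow> real)" for f
    by (rule integrable_Pi_pmf[OF assms(1)])
  have "(\<lambda>X. sp_limit_factor q X (i,j) * sp_indicator_factor (m,n) X (i,j))
      = (\<lambda>X. 1 - q^2 * of_bool (\<forall>x\<in>{(i,j)}. X x)
             - (1 - q^2) * of_bool (\<forall>x\<in>{(m,j), (i,j), (i,n)}. X x))"
    by (auto simp: fun_eq_iff sp_limit_factor_def sp_indicator_factor_def algebra_simps)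
  then show ?thesis
    using expectation_Pi_bernoulli_all[of S "{(i,j)}" q]
      expectation_Pi_bernoulli_all[of S "{(m,j), (i,j), (i,n)}" q] assms
    by (simp add: algebra_simps power2_eq_square power3_eq_cube numeral_eq_Suc)
qed

lemma expectation_sp_indicator_factor_mult:
  assumes "finite S" "{(i,j), (m,j), (i,n), (m',j), (i,n')} \<subseteq> S"
    "i \<noteq> m" "i \<noteq> m'" "j \<noteq> n" "j \<noteq> n'" "m \<noteq> m'" "n \<noteq> n'" "0 \<le> q" "q \<le> 1"
  shows "measure_pmf.expectation (Pi_pmf S False (\<lambda>_. bernoulli_pmf q))
           (\<lambda>X. sp_indicator_factor (m,n) X (i,j) * sp_indicator_factor (m',n') X (i,j))
         = 1 - 2*q^3 + q^5"
proof -
  have [simp]: "integrable (measure_pmf (Pi_pmf S False (\<lambda>_. bernoulli_pmf q))) (f :: _ \<Rightarrow> real)" for f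
    by (rule integrable_Pi_pmf[OF assms(1)])
  have "(\<lambda>X. sp_indicator_factor (m,n) X (i,j) * sp_indicator_factor (m',n') X (i,j))
      = (\<lambda>X. 1 - of_bool (\<forall>x\<in>{(m,j), (i,j), (i,n)}. X x)
             - of_bool (\<forall>x\<in>{(m',j), (i,j), (i,n')}. X x)
             + of_bool (\<forall>x\<in>{(i,j), (m,j), (i,n), (m',j), (i,n')}. X x))"
    by (auto simp: fun_eq_iff sp_indicator_factor_def)
  then show ?thesis
    using expectation_Pi_bernoulli_all[of S "{(m,j), (i,j), (i,n)}" q]
      expectation_Pi_bernoulli_all[of S "{(m',j), (i,j), (i,n')}" q]
      expectation_Pi_bernoulli_all[of S "{(i,j), (m,j), (i,n), (m',j), (i,n')}" q] assms
    by (simp add: algebra_simps power2_eq_square power3_eq_cube numeral_eq_Suc)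
qed

lemma sp_deviation_mult_eq:
  assumes "finite A"
  shows "(sp_indicator A p X - sp_limit q A X) * (sp_indicator A p' X - sp_limit q A X)
    = (\<Prod>a\<in>A. sp_limit_factor q X a * sp_limit_factor q X a)
      - (\<Prod>a\<in>A. sp_limit_factor q X a * sp_indicator_factor p' X a)
      - (\<Prod>a\<in>A. sp_limit_factor q X a * sp_indicator_factor p X a)
      + (\<Prod>a\<in>A. sp_indicator_factor p X a * sp_indicator_factor p' X a)"
  by (simp add: sp_indicator_eq_prod[OF assms] sp_limit_eq_prod[OF assms] prod.distrib algebra_simps)

definition separated_pair :: "(nat \<times> nat) set \<Rightarrow> nat \<times> nat \<Rightarrow> nat \<times> nat \<Rightarrow> bool" where
  "separated_pair A p p' \<longleftrightarrow> fst p \<notin> fst ` A \<and> fst p' \<notin> fst ` A \<and> snd p \<notin> snd ` A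
     \<and> snd p' \<notin> snd ` A \<and> fst p \<noteq> fst p' \<and> snd p \<noteq> snd p'"

definition cross_entries :: "nat \<times> nat \<Rightarrow> nat \<times> nat \<Rightarrow> nat \<times> nat \<Rightarrow> (nat \<times> nat) set" where
  "cross_entries p p' a = {a, (fst p, snd a), (fst a, snd p), (fst p', snd a), (fst a, snd p')}"

lemma disjoint_family_on_cross_entries:
  assumes "scattered A" "separated_pair A p p'"
  shows "disjoint_family_on (cross_entries p p') A"
  unfolding disjoint_family_on_def
proof (intro ballI impI)
  fix a b assume ab: "a \<in> A" "b \<in> A" "a \<noteq> b"
  obtain i j i' j' where a: "a = (i,j)" and b: "b = (i',j')" by (cases a, cases b)
  obtain m n m' n' where p: "p = (m,n)" "p' = (m',n')" by (cases p, cases p')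
  have "i \<noteq> i'" "j \<noteq> j'"
    using assms(1) ab unfolding scattered_def a b by blast+
  moreover have "i \<in> fst ` A" "i' \<in> fst ` A" "j \<in> snd ` A" "j' \<in> snd ` A"
    using ab unfolding a b by force+
  then have "i \<notin> {m, m'}" "i' \<notin> {m, m'}" "j \<notin> {n, n'}" "j' \<notin> {n, n'}"
    using assms(2) unfolding separated_pair_def p by auto
  ultimately show "cross_entries p p' a \<inter> cross_entries p p' b = {}"
    unfolding cross_entries_def a b p by auto
qed

lemma expectation_sp_deviation_mult_eq_0:
  fixes A :: "(nat \<times> nat) set"
  assumes q: "0 \<le> q" "q \<le> 1" and A: "A \<subseteq> {1..N} \<times> {1..N}" "scattered A"
    and p: "p \<in> {1..N} \<times> {1..N}" "p' \<in> {1..N} \<times> {1..N}" "separated_pair A p p'"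
  shows "measure_pmf.expectation (bern_matrix q N)
     (\<lambda>X. (sp_indicator A p X - sp_limit q A X) * (sp_indicator A p' X - sp_limit q A X)) = 0"
proof -
  obtain m n m' n' where mn: "p = (m,n)" "p' = (m',n')" by (cases p, cases p')
  define S where "S = {1..N} \<times> {1..N}"
  define B where "B = Pi_pmf S False (\<lambda>_. bernoulli_pmf q)"
  define c where "c = 1 - 2*q^3 + q^5"
  have fin: "finite S" "finite A" using A(1) finite_subset unfolding S_def by auto
  have point: "{(i,j), (m,j), (i,n), (m',j), (i,n')} \<subseteq> S \<and> i \<noteq> m \<and> i \<noteq> m' \<and> j \<noteq> n \<and> j \<noteq> n'"
    if "(i,j) \<in> A" for i j
  proof -
    have "i \<in> fst ` A" "j \<in> snd ` A" using that by force+
    then show ?thesis using that A(1) p unfolding S_def separated_pair_def mn by auto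
  qed
  have cross_sub: "\<forall>a\<in>A. cross_entries p p' a \<subseteq> S"
    using point unfolding cross_entries_def mn by fastforce
  note prod_moment = expectation_Pi_pmf_prod_disjoint_eq_power[OF fin(2,1) cross_sub
      disjoint_family_on_cross_entries[OF A(2) p(3)], of _ False "\<lambda>_. bernoulli_pmf q" c, folded B_def]
  have "measure_pmf.expectation B (\<lambda>X. \<Prod>a\<in>A. sp_limit_factor q X a * sp_limit_factor q X a) = c ^ card A"
  proof (intro prod_moment ballI)
    fix a assume "a \<in> A"
    then show "measure_pmf.expectation B (\<lambda>X. sp_limit_factor q X a * sp_limit_factor q X a) = c"
      using point[of "fst a" "snd a"] unfolding B_def c_def
      by (intro expectation_sp_limit_factor_sq fin q) auto
  qed (auto simp: depends_only_on_def cross_entries_def sp_limit_factor_def)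
  moreover have "measure_pmf.expectation B
      (\<lambda>X. \<Prod>a\<in>A. sp_limit_factor q X a * sp_indicator_factor r X a) = c ^ card A"
    if r: "r \<in> {p, p'}" for r
  proof (intro prod_moment ballI)
    fix a assume "a \<in> A"
    obtain i j k l where ij: "a = (i,j)" and kl: "r = (k,l)" by fastforce
    show "measure_pmf.expectation B (\<lambda>X. sp_limit_factor q X a * sp_indicator_factor r X a) = c"
      using point[of i j] r \<open>a \<in> A\<close> unfolding B_def c_def mn ij kl
      by (intro expectation_sp_limit_factor_indicator_factor fin q) auto
  qed (use r in \<open>auto simp: depends_only_on_def cross_entries_def sp_limit_factor_def sp_indicator_factor_def\<close>)
  moreover have "measure_pmf.expectation B
      (\<lambda>X. \<Prod>a\<in>A. sp_indicator_factor p X a * sp_indicator_factor p' X a) = c ^ card A"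
  proof (intro prod_moment ballI)
    fix a assume "a \<in> A"
    obtain i j where ij: "a = (i,j)" by fastforce
    show "measure_pmf.expectation B (\<lambda>X. sp_indicator_factor p X a * sp_indicator_factor p' X a) = c"
      using point[of i j] p(3) \<open>a \<in> A\<close> unfolding B_def c_def mn ij
      by (intro expectation_sp_indicator_factor_mult fin q) (auto simp: separated_pair_def)
  qed (auto simp: depends_only_on_def cross_entries_def sp_indicator_factor_def)
  moreover have "integrable (measure_pmf B) (f :: _ \<Rightarrow> real)" for f
    unfolding B_def by (rule integrable_Pi_pmf[OF fin(1)])
  ultimately show ?thesis
    unfolding bern_matrix_def S_def[symmetric] B_def[symmetric] sp_deviation_mult_eq[OF fin(2)]
    by simp
qed

lemma expectation_sp_deviation_mult_le:
  fixes A :: "(nat \<times> nat) set"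
  assumes q: "0 \<le> q" "q \<le> 1" and A: "A \<subseteq> {1..N} \<times> {1..N}" "scattered A"
    and p: "p \<in> {1..N} \<times> {1..N}" "p' \<in> {1..N} \<times> {1..N}"
  shows "measure_pmf.expectation (bern_matrix q N)
     (\<lambda>X. (sp_indicator A p X - sp_limit q A X) * (sp_indicator A p' X - sp_limit q A X))
     \<le> of_bool (\<not> separated_pair A p p')"
proof (cases "separated_pair A p p'")
  case True
  then show ?thesis using expectation_sp_deviation_mult_eq_0[OF q A p] by simp
next
  case False
  have "(sp_indicator A p X - sp_limit q A X) * (sp_indicator A p' X - sp_limit q A X) \<le> 1" for X
  proof -
    have "\<bar>sp_indicator A r X - sp_limit q A X\<bar> \<le> 1" for r
      using sp_indicator_bounds[of A r X] sp_limit_bounds[OF q, of A X] by linarith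
    then show ?thesis
      by (metis abs_le_D1 abs_mult mult_le_one abs_ge_zero)
  qed
  then have "measure_pmf.expectation (bern_matrix q N)
      (\<lambda>X. (sp_indicator A p X - sp_limit q A X) * (sp_indicator A p' X - sp_limit q A X)) \<le> 1"
    unfolding bern_matrix_def by (intro measure_pmf.integral_le_const integrable_Pi_pmf AE_I2) auto
  then show ?thesis using False by simp
qed

lemma card_not_separated_pairs_le:
  assumes "finite A"
  shows "card {(p, p') \<in> ({1..N} \<times> {1..N}) \<times> ({1..N} \<times> {1..N}). \<not> separated_pair A p p'}
    \<le> (4 * card A + 2) * N^3"
proof -
  define G where "G = {1..N} \<times> {1..N}"
  define R where "R = fst ` A"
  define C where "C = snd ` A"
  have RC: "finite R" "card R \<le> card A" "finite C" "card C \<le> card A"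
    using assms card_image_le unfolding R_def C_def by auto
  define diag_row where "diag_row = (\<lambda>(m,n,n'). ((m,n),(m,n'))) ` ({1..N} \<times> {1..N} \<times> {1..N})"
  define diag_col where "diag_col = (\<lambda>(m,m',n). ((m,n),(m',n))) ` ({1..N} \<times> {1..N} \<times> {1..N})"
  have "{(p, p') \<in> G \<times> G. \<not> separated_pair A p p'}
      \<subseteq> ((R \<times> {1..N}) \<times> G) \<union> (G \<times> (R \<times> {1..N})) \<union> (({1..N} \<times> C) \<times> G) \<union> (G \<times> ({1..N} \<times> C))
         \<union> diag_row \<union> diag_col" (is "_ \<subseteq> ?U")
    unfolding G_def diag_row_def diag_col_def separated_pair_def R_def[symmetric] C_def[symmetric]
    by (auto simp: image_iff)
  then have "card {(p, p') \<in> G \<times> G. \<not> separated_pair A p p'} \<le> card ?U"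
    by (rule card_mono[rotated]) (simp add: RC G_def diag_row_def diag_col_def)
  also have "\<dots> \<le> card ((R \<times> {1..N}) \<times> G) + card (G \<times> (R \<times> {1..N})) + card (({1..N} \<times> C) \<times> G)
         + card (G \<times> ({1..N} \<times> C)) + card diag_row + card diag_col"
    by (intro order_trans[OF card_Un_le] add_mono order_refl)
  also have "\<dots> \<le> card A * N^3 + card A * N^3 + card A * N^3 + card A * N^3 + N^3 + N^3"
    using RC unfolding G_def diag_row_def diag_col_def
    by (intro add_mono order_trans[OF card_image_le])
       (auto simp: card_cartesian_product power3_eq_cube intro!: mult_right_mono)
  also have "\<dots> = (4 * card A + 2) * N^3" by (simp add: algebra_simps)
  finally show ?thesis unfolding G_def .
qed

lemma sp_rate_minus_sp_limit:
  assumes "N > 0"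
  shows "sp_rate N A X - sp_limit q A X
    = (\<Sum>p\<in>{1..N} \<times> {1..N}. sp_indicator A p X - sp_limit q A X) / real N^2"
proof -
  have "(\<Sum>m=1..N. \<Sum>n=1..N. (if \<exists>(i,j)\<in>A. X (m,j) \<and> X (i,j) \<and> X (i,n) then 1 else 0))
      = (\<Sum>p\<in>{1..N} \<times> {1..N}. sp_indicator A p X)"
    unfolding sum.cartesian_product by (simp add: sp_indicator_def case_prod_beta)
  then show ?thesis
    using assms by (simp add: sp_rate_def sum_subtractf power2_eq_square field_simps)
qed

lemma expectation_sp_rate_deviation_sq_le:
  fixes A :: "(nat \<times> nat) set"
  assumes q: "0 \<le> q" "q \<le> 1" and A: "A \<subseteq> {1..N} \<times> {1..N}" "scattered A" and N: "N > 0"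
  shows "measure_pmf.expectation (bern_matrix q N) (\<lambda>X. (sp_rate N A X - sp_limit q A X)^2)
    \<le> (4 * real (card A) + 2) / real N"
proof -
  define G where "G = {1..N} \<times> {1..N}"
  define dev where "dev p X = sp_indicator A p X - sp_limit q A X" for p X
  have fin: "finite G" "finite A" using A(1) finite_subset unfolding G_def by auto
  have not_separated: "G \<times> G \<inter> {x. \<not> separated_pair A (fst x) (snd x)}
      = {(p, p') \<in> G \<times> G. \<not> separated_pair A p p'}"
    by auto
  have integrable: "integrable (measure_pmf (bern_matrix q N)) (f :: _ \<Rightarrow> real)" for f
    unfolding bern_matrix_def by (rule integrable_Pi_pmf) simp
  have "measure_pmf.expectation (bern_matrix q N) (\<lambda>X. (\<Sum>p\<in>G. dev p X)^2)
      = (\<Sum>p\<in>G. \<Sum>p'\<in>G. measure_pmf.expectation (bern_matrix q N) (\<lambda>X. dev p X * dev p' X))"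
    by (simp add: power2_eq_square sum_product Bochner_Integration.integral_sum integrable)
  also have "\<dots> \<le> (\<Sum>p\<in>G. \<Sum>p'\<in>G. of_bool (\<not> separated_pair A p p'))"
    unfolding dev_def G_def by (intro sum_mono expectation_sp_deviation_mult_le q A) auto
  also have "\<dots> = real (card {(p, p') \<in> G \<times> G. \<not> separated_pair A p p'})"
    unfolding sum.cartesian_product not_separated[symmetric] using fin by (simp add: case_prod_beta)
  also have "\<dots> \<le> real ((4 * card A + 2) * N^3)"
    using card_not_separated_pairs_le[OF fin(2), of N] unfolding G_def of_nat_le_iff .
  also have "\<dots> = (4 * real (card A) + 2) * real N^3" by (simp add: algebra_simps)
  finally have second_moment: "measure_pmf.expectation (bern_matrix q N) (\<lambda>X. (\<Sum>p\<in>G. dev p X)^2)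
    \<le> (4 * real (card A) + 2) * real N^3" .
  have "measure_pmf.expectation (bern_matrix q N) (\<lambda>X. (sp_rate N A X - sp_limit q A X)^2)
      = measure_pmf.expectation (bern_matrix q N) (\<lambda>X. (\<Sum>p\<in>G. dev p X)^2) / (real N^2)^2"
    unfolding sp_rate_minus_sp_limit[OF N] G_def[symmetric] dev_def[symmetric]
    by (simp add: power_divide)
  also have "\<dots> \<le> (4 * real (card A) + 2) * real N^3 / (real N^2)^2"
    by (intro divide_right_mono second_moment) simp
  also have "\<dots> = (4 * real (card A) + 2) / real N"
    using N by (simp add: field_simps power2_eq_square power3_eq_cube)
  finally show ?thesis .
qed

lemma prob_sp_rate_deviation_gt_le:
  fixes A :: "(nat \<times> nat) set"
  assumes q: "0 \<le> q" "q \<le> 1" and A: "A \<subseteq> {1..N} \<times> {1..N}" "scattered A"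
    and N: "N > 0" and \<epsilon>: "\<epsilon> > 0"
  shows "measure_pmf.prob (bern_matrix q N) {X. \<bar>sp_rate N A X - sp_limit q A X\<bar> > \<epsilon>}
    \<le> (4 * real (card A) + 2) / \<epsilon>^2 / real N"
proof -
  have "measure_pmf.prob (bern_matrix q N) {X. \<bar>sp_rate N A X - sp_limit q A X\<bar> > \<epsilon>}
      \<le> measure_pmf.prob (bern_matrix q N) {X \<in> space (measure_pmf (bern_matrix q N)).
           \<epsilon>^2 \<le> (sp_rate N A X - sp_limit q A X)^2}"
  proof (rule measure_pmf.finite_measure_mono)
    show "{X. \<bar>sp_rate N A X - sp_limit q A X\<bar> > \<epsilon>} \<subseteq> {X \<in> space (measure_pmf (bern_matrix q N)).
           \<epsilon>^2 \<le> (sp_rate N A X - sp_limit q A X)^2}"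
    proof
      fix X assume "X \<in> {X. \<bar>sp_rate N A X - sp_limit q A X\<bar> > \<epsilon>}"
      then have "\<epsilon>^2 \<le> \<bar>sp_rate N A X - sp_limit q A X\<bar>^2"
        using \<epsilon> by (intro power_mono) auto
      then show "X \<in> {X \<in> space (measure_pmf (bern_matrix q N)). \<epsilon>^2 \<le> (sp_rate N A X - sp_limit q A X)^2}"
        by simp
    qed
  qed simp
  also have "\<dots> \<le> measure_pmf.expectation (bern_matrix q N)
      (\<lambda>X. (sp_rate N A X - sp_limit q A X)^2) / \<epsilon>^2"
    using \<epsilon> by (intro integral_Markov_inequality_measure[where A=UNIV])
      (auto simp: bern_matrix_def intro: integrable_Pi_pmf)
  also have "\<dots> \<le> (4 * real (card A) + 2) / real N / \<epsilon>^2"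
    using \<epsilon> by (intro divide_right_mono expectation_sp_rate_deviation_sq_le q A N) auto
  finally show ?thesis by (simp add: ac_simps)
qed

lemma K'_binomial:
  assumes "0 \<le> q" "q \<le> 1" "A \<subseteq> {1..N} \<times> {1..N}"
  shows "map_pmf (K' A) (bern_matrix q N) = binomial_pmf (card A) q"
proof -
  have "finite A" using assms(3) finite_subset by blast
  then have "binomial_pmf (card A) q
      = map_pmf (\<lambda>f. card {x\<in>A. f x}) (Pi_pmf A False (\<lambda>_. bernoulli_pmf q))"
    using assms by (intro binomial_pmf_altdef') auto
  also have "Pi_pmf A False (\<lambda>_. bernoulli_pmf q)
      = map_pmf (\<lambda>f x. if x \<in> A then f x else False) (bern_matrix q N)"
    unfolding bern_matrix_def by (rule Pi_pmf_subset) (use assms in auto)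
  also have "map_pmf (\<lambda>f. card {x\<in>A. f x}) \<dots> = map_pmf (K' A) (bern_matrix q N)"
    unfolding map_pmf_comp by (intro map_pmf_cong refl) (auto simp: K'_def intro!: arg_cong[where f=card])
  finally show ?thesis ..
qed

theorem lemma3:
  fixes k :: nat and q :: real and phi :: "nat \<Rightarrow> (nat \<times> nat) set"
  assumes q: "0 < q" "q < 1"
    and phi_sub: "\<And>N. N \<ge> k \<Longrightarrow> phi N \<subseteq> {1..N} \<times> {1..N}"
    and phi_card: "\<And>N. N \<ge> k \<Longrightarrow> card (phi N) = k"
    and phi_scat: "\<And>N. N \<ge> k \<Longrightarrow> scattered (phi N)"
  shows "(\<forall>N\<ge>k. map_pmf (K' (phi N)) (bern_matrix q N) = binomial_pmf k q)
    \<and> (\<forall>\<epsilon>>0. (\<lambda>N. measure_pmf.prob (bern_matrix q N)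
          {X. \<bar>sp_rate N (phi N) X - (1 - (1 - q^2) ^ K' (phi N) X)\<bar> > \<epsilon>})
        \<longlonglongrightarrow> 0)"
proof (intro conjI allI impI)
  show "map_pmf (K' (phi N)) (bern_matrix q N) = binomial_pmf k q" if "N \<ge> k" for N
    using K'_binomial[OF _ _ phi_sub] phi_card q that by auto
  fix \<epsilon> :: real assume \<epsilon>: "\<epsilon> > 0"
  let ?P = "\<lambda>N. measure_pmf.prob (bern_matrix q N)
    {X. \<bar>sp_rate N (phi N) X - (1 - (1 - q^2) ^ K' (phi N) X)\<bar> > \<epsilon>}"
  have bound: "\<forall>\<^sub>F N in sequentially. ?P N \<le> (4 * real k + 2) / \<epsilon>^2 / real N"
  proof (rule eventually_sequentiallyI)
    show "?P N \<le> (4 * real k + 2) / \<epsilon>^2 / real N" if "N \<ge> max k 1" for N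
      using prob_sp_rate_deviation_gt_le[OF _ _ phi_sub phi_scat _ \<epsilon>, of q N] phi_card[of N] q that
      by (simp add: sp_limit_def)
  qed
  show "?P \<longlonglongrightarrow> 0"
    by (rule tendsto_sandwich[OF _ bound tendsto_const lim_const_over_n]) simp
qed

end
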